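(* Let $\alpha,\beta\in\mathbb{R}$ satisfy $4<\alpha^2<6$ and $\frac{4}{100}<\beta<\frac{165}{100}$, and let $q_{\alpha,\beta}(w)=w^4+\alpha w^3+(\beta-4)w^2-\alpha w+3$ for $w\in\mathbb{C}$. Then $q_{\alpha,\beta}$ has precisely $1$ root in $\{w\in\mathbb{C}:|w|<1,\ \mathrm{Im}(w)<0\}$, which is simple, precisely $1$ root in $\{w\in\mathbb{C}:|w|<1,\ \mathrm{Im}(w)>0\}$, which is simple, and $2$ different simple roots in $\mathbb{R}\setminus[-1,1]$. In particular, $q_{\alpha,\beta}$ has no roots on the unit circle $S^1$ or on $[-1,1]$. *)

theory Defs
  imports "HOL-Analysis.Analysis" "HOL-Computational_Algebra.Polynomial"
begin

definition q_ab :: "real \<Rightarrow> real \<Rightarrow> complex poly" where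
  "q_ab \<alpha> \<beta> = [:3, - complex_of_real \<alpha>, complex_of_real (\<beta> - 4), complex_of_real \<alpha>, 1:]"

end

(*
  For alpha > 2 (the case alpha < -2 follows from q_{alpha,beta}(w) = q_{-alpha,beta}(-w)) the
  quartic changes sign between -5, -2 and -1, which gives real roots r1 < -2 < r2 < -1.
  Splitting them off, q = (w - r1)(w - r2)(w^2 + p w + s) with r1 r2 s = 3 and p < 0.
  As q > 0 on the positive reals, the quadratic factor has no real root, so it contributes
  a pair of conjugate roots of modulus sqrt s; comparing coefficients shows r1 r2 > 3,
  i.e. s < 1. The four roots are distinct, hence all simple.
*)
theory Submission
  imports Defs "HOL-Library.Quadratic_Discriminant"
begin

definition q_real :: "real \<Rightarrow> real \<Rightarrow> real \<Rightarrow> real" where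
  "q_real a b x = x^4 + a * x^3 + (b - 4) * x^2 - a * x + 3"

text \<open>The coefficients are kept as images under \<open>of_real\<close>, so that real identities between
  them can be substituted directly.\<close>

lemma poly_q_ab:
  "poly (q_ab a b) z
    = z^4 + of_real a * z^3 + of_real (b - 4) * z^2 + of_real (- a) * z + of_real 3"
  unfolding q_ab_def by (simp add: power2_eq_square power3_eq_cube power4_eq_xxxx algebra_simps)

lemma poly_q_ab_reflect: "poly (q_ab a b) z = poly (q_ab (- a) b) (- z)"
  unfolding poly_q_ab by (simp add: power2_eq_square power3_eq_cube power4_eq_xxxx)

lemma monic_quartic_factor:
  fixes x p s r1 r2 :: "'a::comm_ring_1"
  shows "x^4 + (p - (r1 + r2)) * x^3 + (s - (r1 + r2) * p + r1 * r2) * x^2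
      + (r1 * r2 * p - (r1 + r2) * s) * x + r1 * r2 * s
    = (x - r1) * (x - r2) * (x^2 + p * x + s)"
  by (simp add: power2_eq_square power3_eq_cube power4_eq_xxxx algebra_simps)

lemma monic_quartic_split_two_roots:
  fixes c3 c2 c1 c0 r1 r2 :: "'a::field"
  assumes "r1 \<noteq> r2"
    and "r1^4 + c3 * r1^3 + c2 * r1^2 + c1 * r1 + c0 = 0"
    and "r2^4 + c3 * r2^3 + c2 * r2^2 + c1 * r2 + c0 = 0"
  obtains p s where "c3 = p - (r1 + r2)" "c2 = s - (r1 + r2) * p + r1 * r2"
    "c1 = r1 * r2 * p - (r1 + r2) * s" "c0 = r1 * r2 * s"
proof -
  define p where "p = c3 + r1 + r2"
  define s where "s = c2 + (r1 + r2) * p - r1 * r2"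
  define e1 where "e1 = c1 - (r1 * r2 * p - (r1 + r2) * s)"
  define e0 where "e0 = c0 - r1 * r2 * s"
  have division: "x^4 + c3 * x^3 + c2 * x^2 + c1 * x + c0
      = (x - r1) * (x - r2) * (x^2 + p * x + s) + e1 * x + e0" for x
    unfolding p_def s_def e1_def e0_def
    by (simp add: power2_eq_square power3_eq_cube power4_eq_xxxx algebra_simps)
  have "e1 * r1 + e0 = 0" "e1 * r2 + e0 = 0"
    using assms(2,3) division[of r1] division[of r2] by simp_all
  then have "e1 * (r1 - r2) = 0"
    by algebra
  then have "e1 = 0" "e0 = 0"
    using assms(1) \<open>e1 * r1 + e0 = 0\<close> by simp_all
  then have "c1 = r1 * r2 * p - (r1 + r2) * s" "c0 = r1 * r2 * s"
    unfolding e1_def e0_def by simp_all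
  moreover have "c3 = p - (r1 + r2)" "c2 = s - (r1 + r2) * p + r1 * r2"
    unfolding p_def s_def by simp_all
  ultimately show ?thesis
    using that by blast
qed

lemma cubic_le_square_of_quadratic:
  fixes t :: real
  assumes "0 \<le> t"
  shows "6 * (1 - t) * t^2 \<le> (t^2 + 49/25 * t + 1/25)^2"
proof -
  have "0 < 6200 * t^2 - 1299 * t + 98"
  proof -
    have "6200 * t^2 - 1299 * t + 98 = 6200 * (t - 1299/12400)^2 + 742999 / 24800"
      by (simp add: power2_eq_square field_simps)
    moreover have "0 \<le> 6200 * (t - 1299/12400)^2"
      by simp
    ultimately show ?thesis
      by linarith
  qed
  moreover have "(t^2 + 49/25 * t + 1/25)^2 - 6 * (1 - t) * t^2
      = (625 * t^4 + t * (6200 * t^2 - 1299 * t + 98) + 1) / 625"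
    by (simp add: power2_eq_square power4_eq_xxxx field_simps)
  ultimately have "0 \<le> t * (6200 * t^2 - 1299 * t + 98)"
    using assms by simp
  then have "0 \<le> (625 * t^4 + t * (6200 * t^2 - 1299 * t + 98) + 1) / 625"
    by simp
  then show ?thesis
    using \<open>(t^2 + 49/25 * t + 1/25)^2 - 6 * (1 - t) * t^2 = _\<close> by linarith
qed

lemma q_real_pos:
  assumes "2 < a" "a^2 < 6" "1/25 < b" "0 < x"
  shows "0 < q_real a b x"
proof (cases "1 \<le> x")
  case True
  have "q_real a b x = (x - 1)^2 * (x + 1) * (x + 3) + b * x^2 + (a - 2) * x * (x^2 - 1)"
    unfolding q_real_def
    by (simp add: power2_eq_square power3_eq_cube power4_eq_xxxx algebra_simps)
  moreover have "0 \<le> (a - 2) * x * (x^2 - 1)"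
    using True assms by (simp add: one_le_power)
  moreover have "0 < b * x^2" "0 \<le> (x - 1)^2 * (x + 1) * (x + 3)"
    using assms by simp_all
  ultimately show ?thesis
    by linarith
next
  case False
  text \<open>With \<open>t = 1 - x\<^sup>2\<close> the quartic is \<open>t(2 + t) + b x\<^sup>2 - a x t\<close>, and
    \<open>a x t < \<surd>6 x t \<le> t\<^sup>2 + 49/25 t + 1/25 \<le> t(2 + t) + b x\<^sup>2\<close>.\<close>
  define t where "t = 1 - x^2"
  have t: "0 < t" "x^2 = 1 - t"
    using False assms(4) by (simp_all add: t_def power_less_one_iff)
  define g where "g = t^2 + 49/25 * t + 1/25"
  have "g = t * (2 + t) + x^2/25"
    using t by (simp add: g_def power2_eq_square field_simps)
  moreover have "x^2/25 \<le> b * x^2"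
    using mult_right_mono[of "1/25" b "x^2"] assms(3) by simp
  ultimately have g: "0 < g" "g \<le> t * (2 + t) + b * x^2"
    using t(1) zero_le_power2[of t] unfolding g_def by linarith+
  have "(a * x * t)^2 = a^2 * (x * t)^2"
    by (simp add: power_mult_distrib)
  also have "\<dots> < 6 * (x * t)^2"
    using assms t by (intro mult_strict_right_mono) auto
  also have "\<dots> = 6 * (1 - t) * t^2"
    using t by (simp add: power_mult_distrib)
  also have "\<dots> \<le> g^2"
    unfolding g_def using t by (intro cubic_le_square_of_quadratic) simp
  finally have "a * x * t < g"
    using less_imp_le[OF g(1)] by (rule power_less_imp_less_base)
  moreover have "q_real a b x = t * (2 + t) + b * x^2 - a * x * t"
    unfolding q_real_def t_def
    by (simp add: power2_eq_square power3_eq_cube power4_eq_xxxx algebra_simps)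
  ultimately show ?thesis
    using g by linarith
qed

lemma q_real_two_roots_below_minus_one:
  assumes "2 < a" "a^2 < 6" "1/25 < b" "b < 165/100"
  obtains r1 r2 where "r1 < -2" "-2 < r2" "r2 < -1" "q_real a b r1 = 0" "q_real a b r2 = 0"
proof -
  have "a < 245/100"
  proof (rule ccontr)
    assume "\<not> a < 245/100"
    then have "(245/100)^2 \<le> a^2"
      by (intro power_mono) auto
    with assms(2) show False
      by (simp add: power2_eq_square)
  qed
  then have signs: "0 < q_real a b (-5)" "q_real a b (-2) < 0" "0 < q_real a b (-1)"
    using assms by (simp_all add: q_real_def)
  have cont: "continuous_on S (q_real a b)" for S
    unfolding q_real_def by (intro continuous_intros)
  obtain r1 where "-5 \<le> r1" "r1 \<le> -2" "q_real a b r1 = 0"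
    using IVT2'[of "q_real a b" "-2" 0 "-5"] signs cont by force
  moreover obtain r2 where "-2 \<le> r2" "r2 \<le> -1" "q_real a b r2 = 0"
    using IVT'[of "q_real a b" "-2" 0 "-1"] signs cont by force
  moreover have "r1 \<noteq> -2" "r2 \<noteq> -2" "r2 \<noteq> -1"
    using signs calculation by auto
  ultimately show ?thesis
    using that[of r1 r2] by linarith
qed

lemma discrim_neg_if_no_pos_root:
  fixes p s :: real
  assumes "p < 0" "\<And>t. 0 < t \<Longrightarrow> t^2 + p * t + s \<noteq> 0"
  shows "p^2 < 4 * s"
proof (rule ccontr)
  assume "\<not> p^2 < 4 * s"
  then have "0 \<le> discrim 1 p s"
    by (simp add: discrim_def)
  define t where "t = (- p + sqrt (discrim 1 p s)) / (2 * 1)"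
  have "1 * t^2 + p * t + s = 0"
    by (simp only: discriminant_nonneg[OF one_neq_zero \<open>0 \<le> discrim 1 p s\<close>]) (simp add: t_def)
  moreover have "0 < t"
    unfolding t_def using assms(1) real_sqrt_ge_zero[OF \<open>0 \<le> discrim 1 p s\<close>]
    by (intro divide_pos_pos) linarith+
  ultimately show False
    using assms(2) by simp
qed

text \<open>If \<open>s \<ge> 1\<close> then \<open>v \<le> 3\<close>, which forces \<open>u \<ge> 2a\<close> and hence \<open>b \<le> 8 - 2a\<^sup>2 < 0\<close>.\<close>

lemma quartic_cofactor_const_lt_1:
  fixes a b u v p s :: real
  assumes "2 < a" "1/25 < b" "2 < v"
    and coeffs: "u + p = a" "v + s + u * p = b - 4" "u * s + p * v = -a" "v * s = 3"
  shows "s < 1"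
proof (rule ccontr)
  assume "\<not> s < 1"
  have p: "p = a - u"
    using coeffs(1) by simp
  have "v \<le> 3"
    using \<open>\<not> s < 1\<close> coeffs(4) \<open>2 < v\<close> mult_left_mono[of 1 s v] by simp
  have "u * (v^2 - 3) = a * v * (v + 1)"
  proof -
    have "u * (v^2 - 3) = u * v^2 - v * (u * s)"
      using coeffs(4) by (simp add: algebra_simps)
    also have "u * s = - a - (a - u) * v"
      using coeffs(3) unfolding p by linarith
    finally show ?thesis
      by (simp add: power2_eq_square algebra_simps)
  qed
  moreover have "0 \<le> (3 - v) * (v + 2)" "0 \<le> (3 - v) * (v - 1)" "4 < v^2"
    using \<open>2 < v\<close> \<open>v \<le> 3\<close> power_strict_mono[of 2 v 2] by simp_all
  ultimately have "(2 * a) * (v^2 - 3) \<le> u * (v^2 - 3)" "0 < v^2 - 3"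
    using \<open>2 < a\<close> mult_left_mono[of "2 * (v^2 - 3)" "v * (v + 1)" a]
    by (simp_all add: power2_eq_square algebra_simps)
  then have "2 * a \<le> u"
    by (simp add: mult_le_cancel_right_pos)
  then have "2 * a * a \<le> u * (u - a)"
    using \<open>2 < a\<close> by (intro mult_mono) auto
  then have "u * p \<le> - 2 * a^2"
    unfolding p by (simp add: power2_eq_square algebra_simps)
  moreover have "v + s \<le> 4"
  proof -
    have "v * (v + s) \<le> v * 4"
      using coeffs(4) \<open>0 \<le> (3 - v) * (v - 1)\<close> by (simp add: algebra_simps)
    then show ?thesis
      using \<open>2 < v\<close> by simp
  qed
  ultimately have "b \<le> 8 - 2 * a^2"
    using coeffs(2) by linarith
  moreover have "4 < a^2"
    using \<open>2 < a\<close> power_strict_mono[of 2 a 2] by simp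
  ultimately show False
    using \<open>1/25 < b\<close> by simp
qed

lemma q_real_factor:
  assumes "a = p - (r1 + r2)" "b - 4 = s - (r1 + r2) * p + r1 * r2"
    "- a = r1 * r2 * p - (r1 + r2) * s" "3 = r1 * r2 * s"
  shows "q_real a b x = (x - r1) * (x - r2) * (x^2 + p * x + s)"
proof -
  have "q_real a b x = x^4 + (p - (r1 + r2)) * x^3 + (s - (r1 + r2) * p + r1 * r2) * x^2
      + (r1 * r2 * p - (r1 + r2) * s) * x + r1 * r2 * s"
    unfolding assms[symmetric] q_real_def by simp
  then show ?thesis
    by (simp only: monic_quartic_factor)
qed

lemma poly_q_ab_factor:
  assumes "a = p - (r1 + r2)" "b - 4 = s - (r1 + r2) * p + r1 * r2"
    "- a = r1 * r2 * p - (r1 + r2) * s" "3 = r1 * r2 * s"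
  shows "poly (q_ab a b) z
    = (z - of_real r1) * (z - of_real r2) * (z^2 + of_real p * z + of_real s)"
proof -
  have "poly (q_ab a b) z = z^4 + of_real (p - (r1 + r2)) * z^3
      + of_real (s - (r1 + r2) * p + r1 * r2) * z^2
      + of_real (r1 * r2 * p - (r1 + r2) * s) * z + of_real (r1 * r2 * s)"
    unfolding poly_q_ab assms[symmetric] ..
  then show ?thesis
    using monic_quartic_factor[of z "of_real p" "of_real r1" "of_real r2" "of_real s"] by simp
qed

lemma q_ab_factorization_pos:
  assumes "2 < a" "a^2 < 6" "1/25 < b" "b < 165/100"
  obtains r1 r2 p s where "r1 < -1" "r2 < -1" "r1 \<noteq> r2" "p^2 < 4 * s" "s < 1"
    "\<And>z. poly (q_ab a b) z
      = (z - of_real r1) * (z - of_real r2) * (z^2 + of_real p * z + of_real s)"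
proof -
  obtain r1 r2 where roots: "r1 < -2" "-2 < r2" "r2 < -1" "q_real a b r1 = 0" "q_real a b r2 = 0"
    using q_real_two_roots_below_minus_one assms by blast
  obtain p s where vieta: "a = p - (r1 + r2)" "b - 4 = s - (r1 + r2) * p + r1 * r2"
      "- a = r1 * r2 * p - (r1 + r2) * s" "3 = r1 * r2 * s"
    using monic_quartic_split_two_roots[of r1 r2 a "b - 4" "- a" 3] roots
    by (auto simp: q_real_def)
  have "2 * 1 < (- r1) * (- r2)"
    using roots by (intro mult_strict_mono) auto
  then have v: "2 < r1 * r2"
    by simp
  then have "0 < s"
    using vieta(4) mult_less_cancel_left_pos[of "r1 * r2" 0 s] by simp
  then have "0 < - (r1 + r2) * s"
    using roots by simp
  then have "r1 * r2 * p < 0"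
    using vieta(3) assms(1) by linarith
  then have "p < 0"
    using v mult_less_cancel_left_pos[of "r1 * r2" p 0] by simp
  moreover have "t^2 + p * t + s \<noteq> 0" if "0 < t" for t
    using q_real_pos[OF assms(1-3) that] q_real_factor[OF vieta, of t] by auto
  ultimately have "p^2 < 4 * s"
    by (rule discrim_neg_if_no_pos_root)
  moreover have "s < 1"
    using quartic_cofactor_const_lt_1[of a b "r1 * r2" "- (r1 + r2)" p s] assms(1,3) v vieta
    by (simp add: algebra_simps)
  ultimately show ?thesis
    using roots poly_q_ab_factor[OF vieta] by (intro that[of r1 r2 p s]) auto
qed

lemma q_ab_factorization:
  assumes "4 < a^2" "a^2 < 6" "4/100 < b" "b < 165/100"
  obtains r1 r2 p s where "1 < \<bar>r1\<bar>" "1 < \<bar>r2\<bar>" "r1 \<noteq> r2" "p^2 < 4 * s" "s < 1"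
    "\<And>z. poly (q_ab a b) z
      = (z - of_real r1) * (z - of_real r2) * (z^2 + of_real p * z + of_real s)"
proof -
  have b: "1/25 < b"
    using assms(3) by simp
  have "2 < \<bar>a\<bar>"
    using power_less_imp_less_base[of 2 2 "\<bar>a\<bar>"] assms(1) by simp
  then consider "2 < a" | "2 < - a"
    by linarith
  then show ?thesis
  proof cases
    case 1
    obtain r1 r2 p s where "r1 < -1" "r2 < -1" "r1 \<noteq> r2" "p^2 < 4 * s" "s < 1"
        "\<And>z. poly (q_ab a b) z
          = (z - of_real r1) * (z - of_real r2) * (z^2 + of_real p * z + of_real s)"
      using q_ab_factorization_pos[OF 1 assms(2) b assms(4)] by blast
    then show ?thesis
      by (intro that[of r1 r2 p s]) auto
  next
    case 2
    have "(- a)^2 < 6"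
      using assms(2) by simp
    obtain r1 r2 p s where "r1 < -1" "r2 < -1" "r1 \<noteq> r2" "p^2 < 4 * s" "s < 1" and factor:
        "\<And>z. poly (q_ab (- a) b) z
          = (z - of_real r1) * (z - of_real r2) * (z^2 + of_real p * z + of_real s)"
      using q_ab_factorization_pos[OF 2 \<open>(- a)^2 < 6\<close> b assms(4)] by blast
    moreover have "poly (q_ab a b) z
        = (z - of_real (- r1)) * (z - of_real (- r2)) * (z^2 + of_real (- p) * z + of_real s)" for z
      unfolding poly_q_ab_reflect[of a] factor by (simp add: power2_eq_square algebra_simps)
    ultimately show ?thesis
      by (intro that[of "- r1" "- r2" "- p" s]) auto
  qed
qed

lemma real_quadratic_conj_roots:
  fixes p s :: real
  assumes "p^2 < 4 * s"
  obtains w where "0 < Im w" "cmod w = sqrt s"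
    "\<And>z. z^2 + of_real p * z + of_real s = (z - w) * (z - cnj w)"
proof
  define w where "w = Complex (- p / 2) (sqrt (4 * s - p^2) / 2)"
  show "0 < Im w"
    using assms by (simp add: w_def)
  have norm2: "(Re w)^2 + (Im w)^2 = s"
    using assms by (simp add: w_def power_divide field_simps)
  then show "cmod w = sqrt s"
    by (simp add: cmod_def)
  show "z^2 + of_real p * z + of_real s = (z - w) * (z - cnj w)" for z
  proof -
    have "(z - w) * (z - cnj w) = z^2 - (w + cnj w) * z + w * cnj w"
      by (simp add: power2_eq_square algebra_simps)
    moreover have "w + cnj w = - of_real p" "w * cnj w = of_real s"
      using norm2 by (simp_all add: complex_add_cnj complex_mult_cnj w_def)
    ultimately show ?thesis
      by simp
  qed
qed

lemma order_prod_linear: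
  fixes A :: "'a::idom set"
  assumes "finite A"
  shows "order x (\<Prod>c\<in>A. [:- c, 1:]) = (if x \<in> A then 1 else 0)"
  using assms
proof (induction rule: finite_induct)
  case empty
  then show ?case
    by (simp add: order_0I)
next
  case (insert c A)
  have "(\<Prod>c\<in>A. [:- c, 1:]) \<noteq> 0"
    using insert.hyps(1) by (simp add: prod_zero_iff)
  then have "order x (\<Prod>c\<in>insert c A. [:- c, 1:])
      = order x [:- c, 1:] + order x (\<Prod>c\<in>A. [:- c, 1:])"
    unfolding prod.insert[OF insert.hyps] by (intro order_mult no_zero_divisors) simp_all
  also have "order x [:- c, 1:] = (if x = c then 1 else 0)"
    using order_power_n_n[of c 1] by (simp add: order_0I)
  finally show ?case
    using insert by simp
qed

lemma poly_eq_prod_linear_simple_roots: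
  fixes Q :: "'a::{idom,ring_char_0} poly"
  assumes "finite A" "\<And>z. poly Q z = (\<Prod>c\<in>A. z - c)"
  shows "poly Q z = 0 \<longleftrightarrow> z \<in> A" "z \<in> A \<Longrightarrow> order z Q = 1"
proof -
  show "poly Q z = 0 \<longleftrightarrow> z \<in> A"
    using assms by simp
  have "Q = (\<Prod>c\<in>A. [:- c, 1:])"
    by (rule poly_eq_poly_eq_iff[THEN iffD1]) (simp add: fun_eq_iff poly_prod assms(2))
  then show "z \<in> A \<Longrightarrow> order z Q = 1"
    using order_prod_linear[OF assms(1)] by simp
qed

theorem mainTheorem4:
  fixes \<alpha> \<beta> :: real
  assumes "4 < \<alpha>^2" and "\<alpha>^2 < 6"
    and "4/100 < \<beta>" and "\<beta> < 165/100"
  shows "card {w. cmod w < 1 \<and> Im w < 0 \<and> poly (q_ab \<alpha> \<beta>) w = 0} = 1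
    \<and> (\<forall>w. cmod w < 1 \<and> Im w < 0 \<and> poly (q_ab \<alpha> \<beta>) w = 0 \<longrightarrow> order w (q_ab \<alpha> \<beta>) = 1)
    \<and> card {w. cmod w < 1 \<and> Im w > 0 \<and> poly (q_ab \<alpha> \<beta>) w = 0} = 1
    \<and> (\<forall>w. cmod w < 1 \<and> Im w > 0 \<and> poly (q_ab \<alpha> \<beta>) w = 0 \<longrightarrow> order w (q_ab \<alpha> \<beta>) = 1)
    \<and> card {x::real. \<bar>x\<bar> > 1 \<and> poly (q_ab \<alpha> \<beta>) (complex_of_real x) = 0} = 2
    \<and> (\<forall>x::real. \<bar>x\<bar> > 1 \<and> poly (q_ab \<alpha> \<beta>) (complex_of_real x) = 0
          \<longrightarrow> order (complex_of_real x) (q_ab \<alpha> \<beta>) = 1)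
    \<and> (\<forall>w. cmod w = 1 \<longrightarrow> poly (q_ab \<alpha> \<beta>) w \<noteq> 0)
    \<and> (\<forall>x::real. \<bar>x\<bar> \<le> 1 \<longrightarrow> poly (q_ab \<alpha> \<beta>) (complex_of_real x) \<noteq> 0)"
proof -
  obtain r1 r2 p s where r: "1 < \<bar>r1\<bar>" "1 < \<bar>r2\<bar>" "r1 \<noteq> r2" and ps: "p^2 < 4 * s" "s < 1"
    and factor: "\<And>z. poly (q_ab \<alpha> \<beta>) z
      = (z - of_real r1) * (z - of_real r2) * (z^2 + of_real p * z + of_real s)"
    using q_ab_factorization[OF assms] by blast
  obtain w where w: "0 < Im w" "cmod w = sqrt s"
    and quadratic: "\<And>z. z^2 + of_real p * z + of_real s = (z - w) * (z - cnj w)"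
    using real_quadratic_conj_roots[OF ps(1)] by blast
  have "cmod w < 1"
    using w(2) ps(2) by simp
  define R where "R = {complex_of_real r1, complex_of_real r2, w, cnj w}"
  have "poly (q_ab \<alpha> \<beta>) z = (\<Prod>c\<in>R. z - c)" for z
    using r(3) w(1) unfolding factor quadratic R_def by (simp add: complex_eq_iff mult.assoc)
  then have roots: "poly (q_ab \<alpha> \<beta>) z = 0 \<longleftrightarrow> z \<in> R"
    and simple: "z \<in> R \<Longrightarrow> order z (q_ab \<alpha> \<beta>) = 1" for z
    using poly_eq_prod_linear_simple_roots[of R "q_ab \<alpha> \<beta>"] by (simp_all add: R_def)
  have "{z. cmod z < 1 \<and> Im z < 0 \<and> poly (q_ab \<alpha> \<beta>) z = 0} = {cnj w}"
    "{z. cmod z < 1 \<and> Im z > 0 \<and> poly (q_ab \<alpha> \<beta>) z = 0} = {w}"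
    using roots r w(1) \<open>cmod w < 1\<close> by (auto simp: R_def)
  moreover have "{x. \<bar>x\<bar> > 1 \<and> poly (q_ab \<alpha> \<beta>) (complex_of_real x) = 0} = {r1, r2}"
    using roots r w(1) by (auto simp: R_def complex_eq_iff)
  moreover have "poly (q_ab \<alpha> \<beta>) z \<noteq> 0" if "cmod z = 1" for z
    using that roots r \<open>cmod w < 1\<close> by (auto simp: R_def)
  moreover have "poly (q_ab \<alpha> \<beta>) (complex_of_real x) \<noteq> 0" if "\<bar>x\<bar> \<le> 1" for x
    using that roots r w(1) by (auto simp: R_def complex_eq_iff)
  ultimately show ?thesis
    using simple roots r(3) by auto
qed

end
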